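(* Let $p\in(0,1)$, $x>2$, and let $(\xi_n)_{n\geq1}$ be i.i.d. with $\mathbf{P}(\xi_1=1)=p=1-\mathbf{P}(\xi_1=-1)$. Set $W_0:=x$, $B_1:=1$, $W_n:=W_{n-1}+\xi_nB_n$, $B_{n+1}:=B_n2^{\xi_n}$ for $n\geq1$, $f(x,p):=\mathbf{P}(W_n\leq0\text{ for some }n)$, $S_0:=0$, $S_n:=\sum_{i=1}^n\xi_i$, and $$S:=\sum_{n=1}^\infty\mathbf{1}_{\{\xi_n=1\}}2^{S_{n-1}}\in[0,\infty].$$ Then $f(x,p)=\mathbf{P}(S>x-2)$. *)

theory Defs
  imports "HOL-Probability.Probability"
begin

text \<open>Bet sizes: bet xi w (Suc n) is B_(n+1); B_1 = 1, B_(n+1) = B_n * 2 ^ xi_n.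
  The value at index 0 is unused.\<close>
fun bet :: "(nat \<Rightarrow> 'a \<Rightarrow> real) \<Rightarrow> 'a \<Rightarrow> nat \<Rightarrow> real" where
  "bet xi w 0 = 1"
| "bet xi w (Suc 0) = 1"
| "bet xi w (Suc (Suc n)) = bet xi w (Suc n) * 2 powr (xi (Suc n) w)"

fun wealth :: "real \<Rightarrow> (nat \<Rightarrow> 'a \<Rightarrow> real) \<Rightarrow> 'a \<Rightarrow> nat \<Rightarrow> real" where
  "wealth x xi w 0 = x"
| "wealth x xi w (Suc n) = wealth x xi w n + xi (Suc n) w * bet xi w (Suc n)"

definition psum :: "(nat \<Rightarrow> 'a \<Rightarrow> real) \<Rightarrow> 'a \<Rightarrow> nat \<Rightarrow> real" where
  "psum xi w n = (\<Sum>i\<in>{1..n}. xi i w)"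

definition Ssum :: "(nat \<Rightarrow> 'a \<Rightarrow> real) \<Rightarrow> 'a \<Rightarrow> ennreal" where
  "Ssum xi w = (\<Sum>m. ennreal (if xi (Suc m) w = 1 then 2 powr (psum xi w m) else 0))"

end

theory Submission
  imports Defs
begin

text \<open>On a path with all \<open>\<xi>\<^sub>n = \<plusminus>1\<close>, induction gives \<open>W\<^sub>n = x - 2 - U\<^sub>n + 2\<^bsup>S\<^sub>n + 1\<^esup>\<close>,
  where \<open>U\<^sub>n\<close> is the \<open>n\<close>-th partial sum of the series \<open>S\<close>. So ruin at time \<open>n\<close> forces
  \<open>S \<ge> U\<^sub>n > x - 2\<close>. Conversely, if \<open>U\<^sub>N > x - 2\<close>, consider a later block of outcomes
  \<open>+1, -1, -1, -1\<close> starting at time \<open>n \<ge> N\<close>: across it \<open>U\<close> grows by \<open>2\<^bsup>S\<^sub>n\<^esup>\<close> while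
  \<open>2\<^bsup>S + 1\<^esup>\<close> drops from \<open>2\<^bsup>S\<^sub>n + 1\<^esup>\<close> to \<open>2\<^bsup>S\<^sub>n - 1\<^esup>\<close>, so \<open>W\<^sub>n\<^sub>+\<^sub>4 < x - 2 - U\<^sub>n < 0\<close>.
  By independence and the Borel 0-1 law such blocks occur infinitely often almost surely,
  hence the two events differ by a null set.\<close>

definition partial_Ssum :: "(nat \<Rightarrow> 'a \<Rightarrow> real) \<Rightarrow> 'a \<Rightarrow> nat \<Rightarrow> real" where
  "partial_Ssum xi w n = (\<Sum>m<n. if xi (Suc m) w = 1 then 2 powr (psum xi w m) else 0)"

lemma psum_0 [simp]: "psum xi w 0 = 0"
  by (simp add: psum_def)

lemma psum_Suc [simp]: "psum xi w (Suc n) = psum xi w n + xi (Suc n) w"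
  by (simp add: psum_def add.commute)

lemma bet_Suc_eq_powr_psum: "bet xi w (Suc n) = 2 powr psum xi w n"
  by (induction n) (auto simp: powr_add)

lemma partial_Ssum_0 [simp]: "partial_Ssum xi w 0 = 0"
  by (simp add: partial_Ssum_def)

lemma partial_Ssum_Suc [simp]:
  "partial_Ssum xi w (Suc n) =
     partial_Ssum xi w n + (if xi (Suc n) w = 1 then 2 powr psum xi w n else 0)"
  by (simp add: partial_Ssum_def)

lemma partial_Ssum_mono: "m \<le> n \<Longrightarrow> partial_Ssum xi w m \<le> partial_Ssum xi w n"
  unfolding partial_Ssum_def by (rule sum_mono2) auto

lemma Ssum_eq_SUP_partial_Ssum: "Ssum xi w = (SUP n. ennreal (partial_Ssum xi w n))"
  unfolding Ssum_def partial_Ssum_def by (simp add: suminf_eq_SUP sum_ennreal)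

lemma wealth_eq_partial_Ssum:
  assumes "\<And>i. 1 \<le> i \<Longrightarrow> xi i w = 1 \<or> xi i w = -1"
  shows "wealth x xi w n = x - 2 - partial_Ssum xi w n + 2 * 2 powr psum xi w n"
proof (induction n)
  case (Suc n)
  have "xi (Suc n) w = 1 \<or> xi (Suc n) w = -1"
    using assms by simp
  then show ?case
    using Suc by (auto simp: bet_Suc_eq_powr_psum powr_add powr_minus)
qed simp

definition win_then_three_losses :: "(nat \<Rightarrow> 'a \<Rightarrow> real) \<Rightarrow> 'a \<Rightarrow> nat \<Rightarrow> bool" where
  "win_then_three_losses xi w n \<longleftrightarrow>
     xi (n + 1) w = 1 \<and> xi (n + 2) w = -1 \<and> xi (n + 3) w = -1 \<and> xi (n + 4) w = -1"

lemma wealth_after_win_then_three_losses: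
  assumes "\<And>i. 1 \<le> i \<Longrightarrow> xi i w = 1 \<or> xi i w = -1"
    and "win_then_three_losses xi w n"
  shows "wealth x xi w (n + 4) < x - 2 - partial_Ssum xi w n"
proof -
  have n4: "n + 4 = Suc (Suc (Suc (Suc n)))"
    by simp
  have "partial_Ssum xi w (n + 4) = partial_Ssum xi w n + 2 powr psum xi w n"
    and "psum xi w (n + 4) = psum xi w n - 2"
    using assms(2) unfolding n4 win_then_three_losses_def by (simp_all add: numeral_eq_Suc)
  then have "wealth x xi w (n + 4) = x - 2 - partial_Ssum xi w n - 2 powr psum xi w n / 2"
    using wealth_eq_partial_Ssum[where xi = xi and w = w, OF assms(1)] by (simp add: powr_diff)
  then show ?thesis
    by simp
qed

lemma ruin_iff_Ssum_gt:
  assumes pm: "\<And>i. 1 \<le> i \<Longrightarrow> xi i w = 1 \<or> xi i w = -1"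
    and pattern: "infinite {n. win_then_three_losses xi w n}"
    and "2 \<le> x"
  shows "(\<exists>n. wealth x xi w n \<le> 0) \<longleftrightarrow> ennreal (x - 2) < Ssum xi w"
proof
  assume "\<exists>n. wealth x xi w n \<le> 0"
  then obtain n where "wealth x xi w n \<le> 0"
    by blast
  then have "x - 2 < partial_Ssum xi w n"
    using wealth_eq_partial_Ssum[where xi = xi and w = w, OF pm, of x n]
      powr_gt_zero[of 2 "psum xi w n"] by linarith
  then have "ennreal (x - 2) < ennreal (partial_Ssum xi w n)"
    using \<open>2 \<le> x\<close> by (simp add: ennreal_lessI)
  also have "\<dots> \<le> Ssum xi w"
    unfolding Ssum_eq_SUP_partial_Ssum by (rule SUP_upper) simp
  finally show "ennreal (x - 2) < Ssum xi w" .
next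
  assume "ennreal (x - 2) < Ssum xi w"
  then obtain N where "ennreal (x - 2) < ennreal (partial_Ssum xi w N)"
    unfolding Ssum_eq_SUP_partial_Ssum by (auto simp: less_SUP_iff)
  then have N: "x - 2 < partial_Ssum xi w N"
    using \<open>2 \<le> x\<close> by (simp add: ennreal_less_iff)
  obtain n where "win_then_three_losses xi w n" and "N \<le> n"
    using pattern by (auto simp: infinite_nat_iff_unbounded_le)
  moreover have "partial_Ssum xi w N \<le> partial_Ssum xi w n"
    using \<open>N \<le> n\<close> by (rule partial_Ssum_mono)
  ultimately have "wealth x xi w (n + 4) < x - 2 - partial_Ssum xi w N"
    using wealth_after_win_then_three_losses[where xi = xi and w = w, OF pm, of n x] by linarith
  with N show "\<exists>n. wealth x xi w n \<le> 0"
    by (intro exI[of _ "n + 4"]) simp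
qed

lemma (in prob_space) AE_infinitely_often_indep_events:
  fixes E :: "nat \<Rightarrow> 'a set"
  assumes indep: "indep_events E UNIV"
    and "0 < c" and bound: "\<And>k. c \<le> prob (E k)"
  shows "AE w in M. infinite {k. w \<in> E k}"
proof -
  define A where "A n = (\<Union>k\<in>{n..}. E k)" for n
  have E_events: "E k \<in> events" for k
    using indep by (auto simp: indep_events_def)
  then have A_events: "range A \<subseteq> events"
    unfolding A_def by (auto intro!: sets.countable_UN')
  have "decseq A"
    unfolding A_def decseq_def by (auto 0 3 intro: order_trans)
  have "c \<le> prob (A n)" for n
    using bound[of n] finite_measure_mono[of "E n" "A n"] A_events by (force simp: A_def)
  then have "c \<le> prob (\<Inter>n. A n)"
    using finite_Lim_measure_decseq[OF A_events \<open>decseq A\<close>] by (intro LIMSEQ_le_const) auto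
  then have "prob (\<Inter>n. A n) = 1"
    using borel_0_1_law[OF indep] \<open>0 < c\<close> by (auto simp: A_def)
  then have "AE w in M. w \<in> (\<Inter>n. A n)"
    using A_events by (subst prob_eq_1[symmetric]) auto
  then show ?thesis
    by eventually_elim (auto simp: A_def infinite_nat_iff_unbounded_le)
qed

lemma (in prob_space) indep_events_INT_blocks:
  fixes F :: "'i \<Rightarrow> 'a set" and B :: "'k \<Rightarrow> 'i set"
  assumes indep: "indep_events F I"
    and blocks: "\<And>k. B k \<subseteq> I" "\<And>k. finite (B k)" "\<And>k. B k \<noteq> {}"
    and "disjoint_family B"
  shows "indep_events (\<lambda>k. \<Inter>i\<in>B k. F i) UNIV"
proof -
  have prob_INT: "prob (\<Inter>i\<in>J. F i) = (\<Prod>i\<in>J. prob (F i))"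
    if "J \<subseteq> I" "finite J" "J \<noteq> {}" for J
    using indep that by (auto simp: indep_events_def)
  have F_events: "F i \<in> events" if "i \<in> I" for i
    using indep that by (auto simp: indep_events_def)
  show ?thesis
  proof (rule indep_eventsI)
    show "(\<Inter>i\<in>B k. F i) \<in> events" for k
      using F_events blocks by (intro sets.finite_INT) blast+
  next
    fix K :: "'k set"
    assume K: "finite K" "K \<noteq> {}"
    have "prob (\<Inter>k\<in>K. \<Inter>i\<in>B k. F i) = prob (\<Inter>i\<in>(\<Union>k\<in>K. B k). F i)"
      by (simp only: INT_extend_simps(9))
    also have "\<dots> = (\<Prod>i\<in>(\<Union>k\<in>K. B k). prob (F i))"
      using K blocks by (intro prob_INT) auto
    also have "\<dots> = (\<Prod>k\<in>K. \<Prod>i\<in>B k. prob (F i))"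
      using K blocks \<open>disjoint_family B\<close>
      by (intro prod.UNION_disjoint) (auto simp: disjoint_family_on_def)
    also have "\<dots> = (\<Prod>k\<in>K. prob (\<Inter>i\<in>B k. F i))"
      using blocks by (simp add: prob_INT)
    finally show "prob (\<Inter>k\<in>K. \<Inter>i\<in>B k. F i) = (\<Prod>k\<in>K. prob (\<Inter>i\<in>B k. F i))" .
  qed
qed

lemma (in prob_space) AE_infinitely_many_blocks:
  fixes F :: "'i \<Rightarrow> 'a set" and B :: "nat \<Rightarrow> 'i set"
  assumes indep: "indep_events F I"
    and blocks: "\<And>k. B k \<subseteq> I" "\<And>k. finite (B k)" "\<And>k. B k \<noteq> {}" "disjoint_family B"
    and card_B: "\<And>k. card (B k) \<le> L"
    and "0 < c" and bound: "\<And>i. i \<in> I \<Longrightarrow> c \<le> prob (F i)"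
  shows "AE w in M. infinite {k. \<forall>i\<in>B k. w \<in> F i}"
proof -
  obtain i where "i \<in> I"
    using blocks(1,3) by blast
  then have "c \<le> 1"
    using bound prob_le_1 order_trans by blast
  have "c ^ L \<le> prob (\<Inter>i\<in>B k. F i)" for k
  proof -
    have "c ^ L \<le> c ^ card (B k)"
      using \<open>0 < c\<close> \<open>c \<le> 1\<close> card_B by (intro power_decreasing) auto
    also have "\<dots> \<le> (\<Prod>i\<in>B k. prob (F i))"
      using \<open>0 < c\<close> by (subst prod_constant[symmetric])
        (intro prod_mono conjI, simp, meson bound blocks(1) subsetD)
    also have "\<dots> = prob (\<Inter>i\<in>B k. F i)"
      using indep blocks by (auto simp: indep_events_def)
    finally show ?thesis .
  qed
  then have "AE w in M. infinite {k. w \<in> (\<Inter>i\<in>B k. F i)}"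
    using \<open>0 < c\<close>
    by (intro AE_infinitely_often_indep_events[where c = "c ^ L"]
        indep_events_INT_blocks[OF indep blocks]) auto
  then show ?thesis
    by simp
qed

lemma (in prob_space) AE_coin_values:
  fixes xi :: "nat \<Rightarrow> 'a \<Rightarrow> real"
  assumes rv: "\<And>n. 1 \<le> n \<Longrightarrow> random_variable borel (xi n)"
    and law: "\<And>n. 1 \<le> n \<Longrightarrow> prob {w \<in> space M. xi n w = 1} + prob {w \<in> space M. xi n w = -1} = 1"
  shows "AE w in M. \<forall>i. 1 \<le> i \<longrightarrow> xi i w = 1 \<or> xi i w = -1"
proof -
  have "AE w in M. xi i w = 1 \<or> xi i w = -1" if "1 \<le> i" for i
  proof -
    have [measurable]: "xi i \<in> borel_measurable M"
      using rv that by simp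
    have "prob ({w \<in> space M. xi i w = 1} \<union> {w \<in> space M. xi i w = -1}) = 1"
      using law[OF that] by (subst finite_measure_Union) auto
    then show ?thesis
      by (subst (asm) prob_eq_1) auto
  qed
  then show ?thesis
    by (auto simp: AE_all_countable)
qed

lemma (in prob_space) AE_infinitely_many_win_then_three_losses:
  fixes xi :: "nat \<Rightarrow> 'a \<Rightarrow> real"
  assumes indep: "indep_vars (\<lambda>_. borel) xi {1..}"
    and "0 < p" "p < 1"
    and win: "\<And>n. 1 \<le> n \<Longrightarrow> prob {w \<in> space M. xi n w = 1} = p"
    and loss: "\<And>n. 1 \<le> n \<Longrightarrow> prob {w \<in> space M. xi n w = -1} = 1 - p"
  shows "AE w in M. infinite {n. win_then_three_losses xi w n}"
proof -
  define v :: "nat \<Rightarrow> real" where "v i = (if i mod 4 = 1 then 1 else -1)" for i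
  define B where "B k = {4 * k + 1 .. 4 * k + 4}" for k :: nat
  define G where "G w = {k. \<forall>i\<in>B k. w \<in> {w \<in> space M. xi i w = v i}}" for w
  have "AE w in M. infinite (G w)"
    unfolding G_def
  proof (rule AE_infinitely_many_blocks[where c = "min p (1 - p)" and L = 4])
    show "indep_events (\<lambda>i. {w \<in> space M. xi i w = v i}) {1..}"
      using indep by (rule indep_eventsI_indep_vars) simp
    show "disjoint_family B"
      by (auto simp: disjoint_family_on_def B_def)
    show "min p (1 - p) \<le> prob {w \<in> space M. xi i w = v i}" if "i \<in> {1..}" for i
      using win[of i] loss[of i] that by (simp add: v_def)
  qed (use \<open>0 < p\<close> \<open>p < 1\<close> in \<open>auto simp: B_def\<close>)
  then show ?thesis
  proof eventually_elim
    case (elim w)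
    have "win_then_three_losses xi w (4 * k)" if "k \<in> G w" for k
    proof -
      have "(4 * k + 1) mod 4 = 1" "(4 * k + 2) mod 4 \<noteq> 1"
        "(4 * k + 3) mod 4 \<noteq> 1" "(4 * k + 4) mod 4 \<noteq> 1"
        by presburger+
      then have "v (4 * k + 1) = 1" "v (4 * k + 2) = -1" "v (4 * k + 3) = -1" "v (4 * k + 4) = -1"
        unfolding v_def by simp_all
      then show ?thesis
        using that by (simp add: win_then_three_losses_def G_def B_def)
    qed
    then have "(\<lambda>k. 4 * k) ` G w \<subseteq> {n. win_then_three_losses xi w n}"
      by auto
    moreover have "infinite ((\<lambda>k. 4 * k) ` G w)"
      using elim by (auto dest!: finite_imageD simp: inj_on_def)
    ultimately show ?case
      using finite_subset by blast
  qed
qed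

lemma borel_measurable_psum:
  assumes "\<And>n. 1 \<le> n \<Longrightarrow> xi n \<in> borel_measurable M"
  shows "(\<lambda>w. psum xi w n) \<in> borel_measurable M"
  by (induction n) (simp_all add: assms borel_measurable_add)

lemma borel_measurable_wealth:
  assumes "\<And>n. 1 \<le> n \<Longrightarrow> xi n \<in> borel_measurable M"
  shows "(\<lambda>w. wealth x xi w n) \<in> borel_measurable M"
proof (induction n)
  case (Suc n)
  note [measurable] = Suc.IH assms[of "Suc n"] borel_measurable_psum[OF assms]
  show ?case
    unfolding wealth.simps bet_Suc_eq_powr_psum by measurable
qed simp

lemma borel_measurable_Ssum:
  assumes "\<And>n. 1 \<le> n \<Longrightarrow> xi n \<in> borel_measurable M"
  shows "Ssum xi \<in> borel_measurable M"
proof -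
  note [measurable] = assms[of "Suc n" for n] borel_measurable_psum[OF assms]
  show ?thesis
    unfolding Ssum_def[abs_def] by measurable
qed

theorem lemma2p2:
  fixes M :: "'a measure" and xi :: "nat \<Rightarrow> 'a \<Rightarrow> real" and p x :: real
  assumes "prob_space M"
    and "0 < p" and "p < 1" and "x > 2"
    and "prob_space.indep_vars M (\<lambda>_. borel) xi {1..}"
    and "\<And>n. n \<ge> 1 \<Longrightarrow> measure M {w \<in> space M. xi n w = 1} = p"
    and "\<And>n. n \<ge> 1 \<Longrightarrow> measure M {w \<in> space M. xi n w = -1} = 1 - p"
  shows "measure M {w \<in> space M. \<exists>n. wealth x xi w n \<le> 0}
         = measure M {w \<in> space M. ennreal (x - 2) < Ssum xi w}"
proof -
  interpret prob_space M by fact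
  have rv: "random_variable borel (xi n)" if "1 \<le> n" for n
    using assms(5) that by (simp add: indep_vars_def)
  note [measurable] = borel_measurable_wealth[OF rv] borel_measurable_Ssum[OF rv]
  have law: "prob {w \<in> space M. xi n w = 1} + prob {w \<in> space M. xi n w = -1} = 1"
    if "1 \<le> n" for n
    using assms(6,7) that by simp
  have "AE w in M. \<forall>i. 1 \<le> i \<longrightarrow> xi i w = 1 \<or> xi i w = -1"
    using rv law by (rule AE_coin_values)
  moreover have "AE w in M. infinite {n. win_then_three_losses xi w n}"
    using assms(5,2,3,6,7) by (rule AE_infinitely_many_win_then_three_losses)
  ultimately have "AE w in M. (\<exists>n. wealth x xi w n \<le> 0) \<longleftrightarrow> ennreal (x - 2) < Ssum xi w"
  proof eventually_elim
    case (elim w)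
    then show ?case
      using \<open>x > 2\<close> by (intro ruin_iff_Ssum_gt) auto
  qed
  then show ?thesis
    by (intro measure_eq_AE) auto
qed

end
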